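(* Let $N=2^n$ and let $a,a'\in[0,N)$ be such that there exist indices $0\le u<w<n$ with $b_k(a)=b_k(a')$ for all $k\in[0,n)\setminus\{u,w\}$, $b_u(a)=b_w(a')=1$ and $b_w(a)=b_u(a')=0$. Then $\mathrm{w}(\mathbf{g}_a)=\mathrm{w}(\mathbf{g}_{a'})$ and $s^{(n)}_a>s^{(n)}_{a'}$.
   Context: All vectors are binary (over $GF(2)$), indices are zero-based. Let $G_N=\begin{pmatrix}1&0\\1&1\end{pmatrix}^{\otimes n}$ for $N=2^n$, with rows $\mathbf{g}_0,\ldots,\mathbf{g}_{N-1}$; $\mathrm{w}(\cdot)$ is Hamming weight. $S^{(n)}_{i,w}$ is the number of words of weight $w$ in $\mathbf{g}_i+\langle\mathbf{g}_{i+1},\ldots,\mathbf{g}_{N-1}\rangle$, and $s^{(n)}_i:=S^{(n)}_{i,\mathrm{w}(\mathbf{g}_i)}$ (the first nonzero entry of $(S^{(n)}_{i,w})_w$). For $i\in[0,N)$, $b_j(i)$ denotes the $j$-th bit of $i$, i.e. $i=\sum_{j=0}^{n-1}b_j(i)2^j$. *)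

theory Defs
  imports Main "HOL-Library.Z2"
begin

text \<open>Binary vectors of length N = 2^n are functions nat => bit (bit = GF(2)),
  relevant only on positions 0..<2^n.\<close>

text \<open>The kernel F = [[1,0],[1,1]] (indices 0,1).\<close>
definition Fker :: "nat \<Rightarrow> nat \<Rightarrow> bit" where
  "Fker i j = (if i = 0 \<and> j = 0 then 1 else if i = 1 then 1 else 0)"

text \<open>G_N = F^{\<otimes> n}, built as G_{2^(n+1)} = F \<otimes> G_{2^n} (Kronecker product).\<close>
fun Gmat :: "nat \<Rightarrow> nat \<Rightarrow> nat \<Rightarrow> bit" where
  "Gmat 0 i j = 1"
| "Gmat (Suc n) i j = Fker (i div 2^n) (j div 2^n) * Gmat n (i mod 2^n) (j mod 2^n)"

definition grow :: "nat \<Rightarrow> nat \<Rightarrow> nat \<Rightarrow> bit" where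
  "grow n i = (\<lambda>j. if j < 2^n then Gmat n i j else 0)"

definition hw :: "nat \<Rightarrow> (nat \<Rightarrow> bit) \<Rightarrow> nat" where
  "hw n v = card {j. j < 2^n \<and> v j \<noteq> 0}"

definition coset :: "nat \<Rightarrow> nat \<Rightarrow> (nat \<Rightarrow> bit) set" where
  "coset n i = {(\<lambda>j. grow n i j + (\<Sum>k\<in>T. grow n k j)) | T. T \<subseteq> {i<..<2^n}}"

definition Scnt :: "nat \<Rightarrow> nat \<Rightarrow> nat \<Rightarrow> nat" where
  "Scnt n i w = card {v \<in> coset n i. hw n v = w}"

definition scnt :: "nat \<Rightarrow> nat \<Rightarrow> nat" where
  "scnt n i = Scnt n i (hw n (grow n i))"

definition bj :: "nat \<Rightarrow> nat \<Rightarrow> nat" where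
  "bj j i = (i div 2^j) mod 2"

end

(*
  Since G_2N = [[G_N, 0], [G_N, G_N]], for i < N the rows of G_2N are g_i = (g_i | 0) and
  g_(N+i) = (g_i | g_i). Hence the coset of a high index N+i is {(x | x) : x in the coset of i},
  and the coset of a low index i is {(x + y | y) : x in the coset of i, y arbitrary}, because
  the rows of G_N span everything. Since w(x + y) + w(y) = w(x) + 2 |supp y - supp x|, the
  minimum weight of a coset is w(g_i), attained at (x + y | y) exactly when x has minimum weight
  and supp y is contained in supp x. This gives w(g_i) = 2^(number of ones of i) and
  s_i = 2^E(i), where E(i) sums 2^(number of ones of i below j) over the zero bits j of i.
  Moving a one of a from position u up to w preserves the number of ones, does not increase
  any summand of E at the other positions, and replaces the summand at w by the smaller one
  at u; so E(a') < E(a).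
*)

theory Submission imports Defs "HOL-Library.Function_Algebras" begin

definition vecs :: "nat \<Rightarrow> (nat \<Rightarrow> bit) set" where
  "vecs n = {v. \<forall>j. 2^n \<le> j \<longrightarrow> v j = 0}"

definition supp :: "nat \<Rightarrow> (nat \<Rightarrow> bit) \<Rightarrow> nat set" where
  "supp n v = {j. j < 2^n \<and> v j \<noteq> 0}"

definition join :: "nat \<Rightarrow> (nat \<Rightarrow> bit) \<Rightarrow> (nat \<Rightarrow> bit) \<Rightarrow> nat \<Rightarrow> bit" where
  "join n x y = (\<lambda>j. if j < 2^n then x j else y (j - 2^n))"

lemma sum_fun_apply: "(\<Sum>k\<in>T. f k) j = (\<Sum>k\<in>T. f k j :: 'a::comm_monoid_add)"
  by (induction T rule: infinite_finite_induct) auto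

lemma add_in_vecs: "x \<in> vecs n \<Longrightarrow> y \<in> vecs n \<Longrightarrow> x + y \<in> vecs n"
  unfolding vecs_def by auto

lemma sum_in_vecs: "(\<And>k. k \<in> T \<Longrightarrow> f k \<in> vecs n) \<Longrightarrow> (\<Sum>k\<in>T. f k) \<in> vecs n"
  unfolding vecs_def by (auto simp: sum_fun_apply intro!: sum.neutral)

lemma grow_in_vecs: "grow n k \<in> vecs n"
  by (simp add: grow_def vecs_def)

lemma hw_eq_card_supp: "hw n v = card (supp n v)"
  by (simp add: hw_def supp_def)

lemma hw_zero: "hw n 0 = 0"
  by (simp add: hw_def)

lemma finite_supp [simp]: "finite (supp n v)"
  by (simp add: supp_def)

lemma supp_add: "supp n (x + y) = (supp n x - supp n y) \<union> (supp n y - supp n x)"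
  by (auto simp: supp_def)

lemma hw_add: "hw n (x + y) + hw n y = hw n x + 2 * card (supp n y - supp n x)"
proof -
  have "card (supp n (x + y)) = card (supp n x - supp n y) + card (supp n y - supp n x)"
    unfolding supp_add by (rule card_Un_disjoint) auto
  moreover have "card (supp n y) = card (supp n x \<inter> supp n y) + card (supp n y - supp n x)"
    by (metis Int_commute card_Int_Diff finite_supp)
  moreover have "card (supp n x) = card (supp n x - supp n y) + card (supp n x \<inter> supp n y)"
    by (metis add.commute card_Int_Diff finite_supp)
  ultimately show ?thesis unfolding hw_eq_card_supp by linarith
qed

lemma vecs_eq_if_supp_eq:
  assumes "x \<in> vecs n" "y \<in> vecs n" "supp n x = supp n y"
  shows "x = y"
proof
  fix j
  show "x j = y j"
  proof (cases "j < 2^n")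
    case True
    then have "x j \<noteq> 0 \<longleftrightarrow> y j \<noteq> 0" using assms(3) by (auto simp: supp_def)
    then show ?thesis by (metis bit_not_one_iff)
  qed (use assms(1,2) in \<open>simp add: vecs_def\<close>)
qed

lemma card_supported_vecs: "card {y \<in> vecs n. supp n y \<subseteq> supp n x} = 2 ^ hw n x"
proof -
  let ?ind = "\<lambda>S j. if j \<in> S then 1 else 0 :: bit"
  have "bij_betw (supp n) {y \<in> vecs n. supp n y \<subseteq> supp n x} (Pow (supp n x))"
  proof (rule bij_betw_imageI)
    show "inj_on (supp n) {y \<in> vecs n. supp n y \<subseteq> supp n x}"
      by (auto intro: inj_onI vecs_eq_if_supp_eq)
    have "S \<in> supp n ` {y \<in> vecs n. supp n y \<subseteq> supp n x}" if "S \<subseteq> supp n x" for S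
    proof
      show "S = supp n (?ind S)" "?ind S \<in> {y \<in> vecs n. supp n y \<subseteq> supp n x}"
        using that by (auto simp: supp_def vecs_def)
    qed
    then show "supp n ` {y \<in> vecs n. supp n y \<subseteq> supp n x} = Pow (supp n x)"
      by auto
  qed
  then show ?thesis
    by (simp add: bij_betw_same_card card_Pow hw_eq_card_supp)
qed

lemma join_add: "join n x y + join n x' y' = join n (x + x') (y + y')"
  by (auto simp: join_def)

lemma join_sum: "(\<Sum>k\<in>T. join n (f k) (g k)) = join n (\<Sum>k\<in>T. f k) (\<Sum>k\<in>T. g k)"
  by (auto simp: sum_fun_apply join_def)

lemma vecs_Suc_join:
  assumes "v \<in> vecs (Suc n)"
  obtains x y where "x \<in> vecs n" "y \<in> vecs n" "v = join n x y"
proof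
  show "(\<lambda>j. if j < 2^n then v j else 0) \<in> vecs n"
    and "(\<lambda>j. if j < 2^n then v (j + 2^n) else 0) \<in> vecs n"
    by (auto simp: vecs_def)
  show "v = join n (\<lambda>j. if j < 2^n then v j else 0) (\<lambda>j. if j < 2^n then v (j + 2^n) else 0)"
    using assms by (auto simp: vecs_def join_def)
qed

lemma join_inject:
  assumes "x \<in> vecs n" "y \<in> vecs n" "x' \<in> vecs n" "y' \<in> vecs n"
  shows "join n x y = join n x' y' \<longleftrightarrow> x = x' \<and> y = y'"
proof
  assume eq: "join n x y = join n x' y'"
  have "x j = x' j \<and> y j = y' j" for j
  proof (cases "j < 2^n")
    case True
    then show ?thesis using fun_cong[OF eq, of j] fun_cong[OF eq, of "j + 2^n"] by (simp add: join_def)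
  qed (use assms in \<open>simp add: vecs_def\<close>)
  then show "x = x' \<and> y = y'" by auto
qed simp

lemma inj_on_join_plus: "inj_on (\<lambda>(x, y). join n (x + y) y) (vecs n \<times> vecs n)"
proof (rule inj_onI, clarify)
  fix x y x' y'
  assume "x \<in> vecs n" "y \<in> vecs n" "x' \<in> vecs n" "y' \<in> vecs n"
    and "join n (x + y) y = join n (x' + y') y'"
  then have "x + y = x' + y' \<and> y = y'"
    using join_inject[of "x + y" n y "x' + y'" y'] add_in_vecs by blast
  then show "x = x' \<and> y = y'" by (metis add_right_cancel)
qed

lemma hw_join: "hw (Suc n) (join n x y) = hw n x + hw n y"
proof -
  have "supp (Suc n) (join n x y) = supp n x \<union> (+) (2^n) ` supp n y"
    by (force simp: supp_def join_def image_iff intro: exI[of _ "_ - 2^n"])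
  moreover have "card (supp n x \<union> (+) (2^n) ` supp n y) = card (supp n x) + card (supp n y)"
    by (subst card_Un_disjoint) (auto simp: supp_def card_image)
  ultimately show ?thesis by (simp add: hw_eq_card_supp)
qed

lemma less_2pow_Suc_cases:
  fixes i :: nat
  assumes "i < 2 ^ Suc n"
  obtains "i < 2 ^ n" | i0 where "i = 2 ^ n + i0" "i0 < 2 ^ n"
  using assms by (metis add_diff_inverse_nat add_less_cancel_left mult_2 power_Suc)

lemma grow_Suc_low: "k < 2^n \<Longrightarrow> grow (Suc n) k = join n (grow n k) 0"
  by (auto simp: fun_eq_iff grow_def join_def Fker_def div_eq_0_iff)

lemma grow_Suc_high: "k < 2^n \<Longrightarrow> grow (Suc n) (2^n + k) = join n (grow n k) (grow n k)"
proof (rule ext)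
  fix j assume k: "k < 2^n"
  show "grow (Suc n) (2^n + k) j = join n (grow n k) (grow n k) j"
  proof (cases "j < 2 ^ Suc n")
    case True
    then show ?thesis using k
      by (elim less_2pow_Suc_cases) (simp_all add: grow_def join_def Fker_def div_add_self1)
  qed (force simp: grow_def join_def)
qed

lemma subset_lessThan_2pow_Suc_split:
  fixes T :: "nat set"
  assumes "T \<subseteq> {..<2^Suc n}"
  shows "T = (T \<inter> {..<2^n}) \<union> (+) (2^n) ` {k. 2^n + k \<in> T}"
    and "{k. 2^n + k \<in> T} \<subseteq> {..<2^n}"
proof -
  have "x \<in> (+) (2^n) ` {k. 2^n + k \<in> T}" if "x \<in> T" "\<not> x < 2^n" for x
    using that by (intro image_eqI[of _ _ "x - 2^n"]) auto
  then show "T = (T \<inter> {..<2^n}) \<union> (+) (2^n) ` {k. 2^n + k \<in> T}" by auto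
  show "{k. 2^n + k \<in> T} \<subseteq> {..<2^n}" using assms by auto
qed

lemma sum_grow_Suc:
  assumes "T1 \<subseteq> {..<2^n}" "T2 \<subseteq> {..<2^n}"
  shows "sum (grow (Suc n)) (T1 \<union> (+) (2^n) ` T2)
     = join n (sum (grow n) T1 + sum (grow n) T2) (sum (grow n) T2)"
proof -
  have fin: "finite T1" "finite T2" using assms finite_subset by blast+
  have "sum (grow (Suc n)) T1 = (\<Sum>k\<in>T1. join n (grow n k) 0)"
    using assms(1) by (auto simp: grow_Suc_low intro!: sum.cong)
  then have "sum (grow (Suc n)) T1 = join n (sum (grow n) T1) 0"
    by (simp add: join_sum)
  moreover have "sum (grow (Suc n)) ((+) (2^n) ` T2) = (\<Sum>k\<in>T2. join n (grow n k) (grow n k))"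
    using assms(2) by (subst sum.reindex) (auto simp: grow_Suc_high intro!: sum.cong)
  then have "sum (grow (Suc n)) ((+) (2^n) ` T2) = join n (sum (grow n) T2) (sum (grow n) T2)"
    by (simp add: join_sum)
  moreover have "T1 \<inter> (+) (2^n) ` T2 = {}" using assms(1) by auto
  ultimately show ?thesis using fin by (simp add: sum.union_disjoint join_add)
qed

lemma vecs_spanned_by_grow: "v \<in> vecs n \<Longrightarrow> \<exists>T \<subseteq> {..<2^n}. v = sum (grow n) T"
proof (induction n arbitrary: v)
  case 0
  then have "v j = (if v 0 = 0 then 0 else grow 0 0) j" for j
    by (cases "j = 0") (auto simp: vecs_def grow_def)
  then have "v = (if v 0 = 0 then 0 else grow 0 0)" ..
  then show ?case by (intro exI[of _ "if v 0 = 0 then {} else {0}"]) auto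
next
  case (Suc n)
  obtain x y where xy: "x \<in> vecs n" "y \<in> vecs n" "v = join n x y"
    using Suc.prems by (rule vecs_Suc_join)
  obtain T1 where T1: "T1 \<subseteq> {..<2^n}" "x + y = sum (grow n) T1"
    using Suc.IH[OF add_in_vecs[OF xy(1,2)]] by blast
  obtain T2 where T2: "T2 \<subseteq> {..<2^n}" "y = sum (grow n) T2"
    using Suc.IH[OF xy(2)] by blast
  have "sum (grow (Suc n)) (T1 \<union> (+) (2^n) ` T2) = join n (x + y + y) y"
    using sum_grow_Suc[OF T1(1) T2(1)] T1(2) T2(2) by simp
  also have "x + y + y = x" by (auto simp: fun_eq_iff)
  finally have "v = sum (grow (Suc n)) (T1 \<union> (+) (2^n) ` T2)" using xy(3) by simp
  moreover have "T1 \<union> (+) (2^n) ` T2 \<subseteq> {..<2^Suc n}" using T1 T2 by auto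
  ultimately show ?case by blast
qed

lemma coset_eq_image: "coset n i = (\<lambda>T. grow n i + sum (grow n) T) ` {T. T \<subseteq> {i<..<2^n}}"
  unfolding coset_def by (auto simp: fun_eq_iff sum_fun_apply)

lemma coset_subset_vecs: "coset n i \<subseteq> vecs n"
  unfolding coset_eq_image by (auto intro!: add_in_vecs grow_in_vecs sum_in_vecs)

lemma finite_coset: "finite (coset n i)"
  unfolding coset_eq_image by (auto intro: finite_subset)

lemma coset_Suc_high:
  assumes i0: "i0 < 2^n"
  shows "coset (Suc n) (2^n + i0) = (\<lambda>x. join n x x) ` coset n i0"
proof (intro equalityI subsetI)
  fix v assume "v \<in> coset (Suc n) (2^n + i0)"
  then obtain T where T: "T \<subseteq> {2^n + i0<..<2^Suc n}"
    and v: "v = grow (Suc n) (2^n + i0) + sum (grow (Suc n)) T"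
    unfolding coset_eq_image by auto
  define T2 where "T2 = {k. 2^n + k \<in> T}"
  have "T \<subseteq> {..<2^Suc n}" using T by auto
  moreover have "T \<inter> {..<2^n} = {}" using T by auto
  ultimately have "T = {} \<union> (+) (2^n) ` T2" "T2 \<subseteq> {..<2^n}"
    using subset_lessThan_2pow_Suc_split[of T n] unfolding T2_def by auto
  then have "v = join n (grow n i0 + sum (grow n) T2) (grow n i0 + sum (grow n) T2)"
    using v sum_grow_Suc[of "{}" n T2] by (simp add: grow_Suc_high[OF i0] join_add)
  moreover have "grow n i0 + sum (grow n) T2 \<in> coset n i0"
    using T unfolding coset_eq_image T2_def by (intro image_eqI[OF refl]) auto
  ultimately show "v \<in> (\<lambda>x. join n x x) ` coset n i0" by blast
next
  fix v assume "v \<in> (\<lambda>x. join n x x) ` coset n i0"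
  then obtain T2 where T2: "T2 \<subseteq> {i0<..<2^n}"
    and v: "v = join n (grow n i0 + sum (grow n) T2) (grow n i0 + sum (grow n) T2)"
    unfolding coset_eq_image by auto
  have "T2 \<subseteq> {..<2^n}" using T2 by auto
  then have "v = grow (Suc n) (2^n + i0) + sum (grow (Suc n)) ({} \<union> (+) (2^n) ` T2)"
    using v sum_grow_Suc[of "{}" n T2] by (simp add: grow_Suc_high[OF i0] join_add)
  moreover have "(+) (2^n) ` T2 \<subseteq> {2^n + i0<..<2^Suc n}" using T2 by auto
  ultimately show "v \<in> coset (Suc n) (2^n + i0)" unfolding coset_eq_image by auto
qed

lemma coset_Suc_low:
  assumes i: "i < 2^n"
  shows "coset (Suc n) i = (\<lambda>(x, y). join n (x + y) y) ` (coset n i \<times> vecs n)"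
proof (intro equalityI subsetI)
  fix v assume "v \<in> coset (Suc n) i"
  then obtain T where T: "T \<subseteq> {i<..<2^Suc n}" and v: "v = grow (Suc n) i + sum (grow (Suc n)) T"
    unfolding coset_eq_image by auto
  define T1 where "T1 = T \<inter> {..<2^n}"
  define T2 where "T2 = {k. 2^n + k \<in> T}"
  have "T \<subseteq> {..<2^Suc n}" using T by auto
  then have "T = T1 \<union> (+) (2^n) ` T2" "T2 \<subseteq> {..<2^n}"
    using subset_lessThan_2pow_Suc_split[of T n] unfolding T1_def T2_def by auto
  then have "v = join n ((grow n i + sum (grow n) T1) + sum (grow n) T2) (sum (grow n) T2)"
    using v sum_grow_Suc[of T1 n T2] by (simp add: grow_Suc_low[OF i] join_add T1_def add.assoc)
  moreover have "grow n i + sum (grow n) T1 \<in> coset n i"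
    using T unfolding coset_eq_image T1_def by (intro image_eqI[OF refl]) auto
  moreover have "sum (grow n) T2 \<in> vecs n" by (auto intro!: sum_in_vecs grow_in_vecs)
  ultimately show "v \<in> (\<lambda>(x, y). join n (x + y) y) ` (coset n i \<times> vecs n)" by auto
next
  fix v assume "v \<in> (\<lambda>(x, y). join n (x + y) y) ` (coset n i \<times> vecs n)"
  then obtain x y where x: "x \<in> coset n i" and y: "y \<in> vecs n" and v: "v = join n (x + y) y"
    by auto
  obtain T1 where T1: "T1 \<subseteq> {i<..<2^n}" "x = grow n i + sum (grow n) T1"
    using x unfolding coset_eq_image by auto
  obtain T2 where T2: "T2 \<subseteq> {..<2^n}" "y = sum (grow n) T2"
    using vecs_spanned_by_grow[OF y] by auto
  have "T1 \<subseteq> {..<2^n}" using T1 by auto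
  then have "v = grow (Suc n) i + sum (grow (Suc n)) (T1 \<union> (+) (2^n) ` T2)"
    using v T1(2) T2 sum_grow_Suc[of T1 n T2] by (simp add: grow_Suc_low[OF i] join_add add.assoc)
  moreover have "T1 \<union> (+) (2^n) ` T2 \<subseteq> {i<..<2^Suc n}" using T1 T2 i by auto
  ultimately show "v \<in> coset (Suc n) i" unfolding coset_eq_image by blast
qed

definition ones_below :: "nat \<Rightarrow> nat \<Rightarrow> nat" where
  "ones_below i j = (\<Sum>k<j. bj k i)"

definition scnt_exponent :: "nat \<Rightarrow> nat \<Rightarrow> nat" where
  "scnt_exponent n i = (\<Sum>j<n. if bj j i = 0 then 2 ^ ones_below i j else 0)"

lemma bj_eq_of_bool: "bj k i = of_bool (bit i k)"
  by (simp add: bj_def bit_iff_odd odd_iff_mod_2_eq_one)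

lemma bj_eq_0_if_less: "i < 2^n \<Longrightarrow> bj n i = 0"
  by (simp add: bj_def)

lemma bj_add_pow:
  assumes "i0 < 2^n"
  shows "bj k (2^n + i0) = (if k = n then 1 else bj k i0)"
proof -
  have "\<not> bit i0 n" using assms by (simp add: bit_iff_odd)
  then show ?thesis
    unfolding bj_eq_of_bool by (subst bit_disjunctive_add_iff) (auto simp: bit_exp_iff)
qed

lemma ones_below_add_pow: "i0 < 2^n \<Longrightarrow> j \<le> n \<Longrightarrow> ones_below (2^n + i0) j = ones_below i0 j"
  unfolding ones_below_def by (intro sum.cong) (auto simp: bj_add_pow)

lemma scnt_exponent_Suc_high:
  "i0 < 2^n \<Longrightarrow> scnt_exponent (Suc n) (2^n + i0) = scnt_exponent n i0"
  unfolding scnt_exponent_def by (auto simp: bj_add_pow ones_below_add_pow intro!: sum.cong)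

lemma scnt_exponent_Suc_low:
  "i < 2^n \<Longrightarrow> scnt_exponent (Suc n) i = scnt_exponent n i + 2 ^ ones_below i n"
  by (simp add: scnt_exponent_def bj_eq_0_if_less)

lemma hw_grow: "i < 2^n \<Longrightarrow> hw n (grow n i) = 2 ^ ones_below i n"
proof (induction n arbitrary: i)
  case 0
  then show ?case by (simp add: hw_def grow_def ones_below_def)
next
  case (Suc n)
  from Suc.prems show ?case
  proof (cases rule: less_2pow_Suc_cases)
    case 1
    then show ?thesis
      using Suc.IH by (simp add: grow_Suc_low hw_join hw_zero ones_below_def bj_eq_0_if_less)
  next
    case (2 i0)
    then show ?thesis
      using Suc.IH[of i0] by (simp add: grow_Suc_high hw_join ones_below_def bj_add_pow
          ones_below_add_pow[unfolded ones_below_def])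
  qed
qed

lemma hw_grow_le: "i < 2^n \<Longrightarrow> v \<in> coset n i \<Longrightarrow> hw n (grow n i) \<le> hw n v"
proof (induction n arbitrary: i v)
  case 0
  have "{0<..<2^0} = ({} :: nat set)" by auto
  with 0 show ?case by (auto simp: coset_eq_image)
next
  case (Suc n)
  from Suc.prems(1) show ?case
  proof (cases rule: less_2pow_Suc_cases)
    case 1
    then obtain x y where "x \<in> coset n i" "v = join n (x + y) y"
      using Suc.prems(2) coset_Suc_low by auto
    then show ?thesis
      using 1 Suc.IH[of i x] hw_add[of n x y] by (simp add: grow_Suc_low hw_join hw_zero)
  next
    case (2 i0)
    then obtain x where "x \<in> coset n i0" "v = join n x x"
      using Suc.prems(2) coset_Suc_high by auto
    then show ?thesis using 2 Suc.IH[of i0 x] by (simp add: grow_Suc_high hw_join)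
  qed
qed

definition min_words :: "nat \<Rightarrow> nat \<Rightarrow> (nat \<Rightarrow> bit) set" where
  "min_words n i = {v \<in> coset n i. hw n v = hw n (grow n i)}"

lemma scnt_eq_card_min_words: "scnt n i = card (min_words n i)"
  by (simp add: scnt_def Scnt_def min_words_def)

lemma scnt_Suc_high: "i0 < 2^n \<Longrightarrow> scnt (Suc n) (2^n + i0) = scnt n i0"
proof -
  assume i0: "i0 < 2^n"
  have "min_words (Suc n) (2^n + i0) = (\<lambda>x. join n x x) ` min_words n i0"
    by (auto simp: min_words_def coset_Suc_high[OF i0] grow_Suc_high[OF i0] hw_join)
  moreover have "inj_on (\<lambda>x. join n x x) (min_words n i0)"
    using coset_subset_vecs join_inject by (fastforce simp: min_words_def intro: inj_onI)
  ultimately show ?thesis by (simp add: scnt_eq_card_min_words card_image)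
qed

lemma min_words_Suc_low:
  assumes i: "i < 2^n"
  shows "min_words (Suc n) i = (\<lambda>(x, y). join n (x + y) y) `
    (SIGMA x:min_words n i. {y \<in> vecs n. supp n y \<subseteq> supp n x})"
proof -
  have "hw (Suc n) (join n (x + y) y) = hw n (grow n i) \<longleftrightarrow>
      x \<in> min_words n i \<and> supp n y \<subseteq> supp n x" if x: "x \<in> coset n i" for x y
  proof -
    have "hw (Suc n) (join n (x + y) y) = hw n x + 2 * card (supp n y - supp n x)"
      by (simp add: hw_join hw_add)
    moreover have "hw n (grow n i) \<le> hw n x" using hw_grow_le[OF i x] .
    ultimately have "hw (Suc n) (join n (x + y) y) = hw n (grow n i) \<longleftrightarrow>
        hw n x = hw n (grow n i) \<and> card (supp n y - supp n x) = 0"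
      by linarith
    then show ?thesis using x by (simp add: min_words_def card_eq_0_iff)
  qed
  then show ?thesis
    by (auto simp: min_words_def coset_Suc_low[OF i] grow_Suc_low[OF i] hw_join hw_zero)
qed

lemma scnt_Suc_low: "i < 2^n \<Longrightarrow> scnt (Suc n) i = scnt n i * 2 ^ hw n (grow n i)"
proof -
  assume i: "i < 2^n"
  let ?S = "SIGMA x:min_words n i. {y \<in> vecs n. supp n y \<subseteq> supp n x}"
  have "?S \<subseteq> vecs n \<times> vecs n"
    using coset_subset_vecs by (auto simp: min_words_def)
  then have "inj_on (\<lambda>(x, y). join n (x + y) y) ?S"
    using inj_on_join_plus by (rule inj_on_subset[rotated])
  then have "scnt (Suc n) i = card ?S"
    by (simp add: scnt_eq_card_min_words min_words_Suc_low[OF i] card_image)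
  also have "\<dots> = (\<Sum>x\<in>min_words n i. card {y \<in> vecs n. supp n y \<subseteq> supp n x})"
    using finite_coset card_supported_vecs
    by (intro card_SigmaI) (auto simp: min_words_def intro: card_ge_0_finite)
  also have "\<dots> = (\<Sum>x\<in>min_words n i. 2 ^ hw n x)"
    by (simp add: card_supported_vecs)
  also have "\<dots> = scnt n i * 2 ^ hw n (grow n i)"
    by (simp add: scnt_eq_card_min_words min_words_def)
  finally show ?thesis .
qed

lemma scnt_eq_pow: "i < 2^n \<Longrightarrow> scnt n i = 2 ^ scnt_exponent n i"
proof (induction n arbitrary: i)
  case 0
  have "{0<..<2^0} = ({} :: nat set)" by auto
  with 0 have "min_words 0 i = {grow 0 0}"
    by (auto simp: min_words_def coset_eq_image)
  then show ?case by (simp add: scnt_eq_card_min_words scnt_exponent_def)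
next
  case (Suc n)
  from Suc.prems show ?case
  proof (cases rule: less_2pow_Suc_cases)
    case 1
    then show ?thesis
      using Suc.IH by (simp add: scnt_Suc_low hw_grow scnt_exponent_Suc_low power_add)
  next
    case (2 i0)
    then show ?thesis using Suc.IH by (simp add: scnt_Suc_high scnt_exponent_Suc_high)
  qed
qed

lemma ones_below_move_bit:
  assumes "\<forall>k<n. bj k a + of_bool (k = w) = bj k a' + of_bool (k = u)" and "j \<le> n"
  shows "ones_below a j + of_bool (w < j) = ones_below a' j + of_bool (u < j)"
proof -
  have "(\<Sum>k<j. bj k a + of_bool (k = w)) = (\<Sum>k<j. bj k a' + of_bool (k = u))"
    using assms by (intro sum.cong) auto
  moreover have "(\<Sum>k<j. of_bool (k = c)) = (of_bool (c < j) :: nat)" for c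
    by (induction j) auto
  ultimately show ?thesis by (simp add: sum.distrib ones_below_def)
qed

lemma scnt_exponent_less_of_move_bit:
  assumes uw: "u < w" "w < n"
    and same: "\<forall>k<n. k \<noteq> u \<and> k \<noteq> w \<longrightarrow> bj k a = bj k a'"
    and bits: "bj u a = 1" "bj w a' = 1" "bj w a = 0" "bj u a' = 0"
  shows "ones_below a n = ones_below a' n" and "scnt_exponent n a' < scnt_exponent n a"
proof -
  have "\<forall>k<n. bj k a + of_bool (k = w) = bj k a' + of_bool (k = u)"
    using uw same bits by auto
  note shift = ones_below_move_bit[OF this]
  show "ones_below a n = ones_below a' n" using shift[of n] uw by simp
  define contrib where "contrib i j = (if bj j i = 0 then 2 ^ ones_below i j else 0 :: nat)" for i j
  define R where "R = {..<n} - {u, w}"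
  have split: "{..<n} = insert u (insert w R)" "u \<notin> insert w R" "w \<notin> R" "finite R"
    using uw by (auto simp: R_def)
  have "contrib a' j \<le> contrib a j" if "j \<in> R" for j
  proof -
    have "ones_below a' j \<le> ones_below a j"
      using shift[of j] that uw by (cases "u < j"; cases "w < j") (auto simp: R_def)
    then show ?thesis using that same by (auto simp: R_def contrib_def)
  qed
  then have rest: "(\<Sum>j\<in>R. contrib a' j) \<le> (\<Sum>j\<in>R. contrib a j)" by (rule sum_mono)
  have "ones_below a' u = ones_below a u" using shift[of u] uw by simp
  also have "\<dots> < ones_below a (Suc u)" using bits(1) by (simp add: ones_below_def)
  also have "\<dots> \<le> ones_below a w" using uw(1) unfolding ones_below_def by (intro sum_mono2) auto
  finally have "contrib a' u < contrib a w" using bits by (simp add: contrib_def)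
  moreover have "contrib a' w = 0" "contrib a u = 0" using bits by (simp_all add: contrib_def)
  ultimately show "scnt_exponent n a' < scnt_exponent n a"
    using rest split unfolding scnt_exponent_def contrib_def[symmetric] by simp
qed

theorem mainTheorem4:
  fixes n a a' u w :: nat
  assumes "a < 2^n" and "a' < 2^n"
    and "u < w" and "w < n"
    and "\<forall>k<n. k \<noteq> u \<and> k \<noteq> w \<longrightarrow> bj k a = bj k a'"
    and "bj u a = 1" and "bj w a' = 1"
    and "bj w a = 0" and "bj u a' = 0"
  shows "hw n (grow n a) = hw n (grow n a') \<and> scnt n a > scnt n a'"
proof
  note move = scnt_exponent_less_of_move_bit[OF assms(3-9)]
  show "hw n (grow n a) = hw n (grow n a')"
    using move(1) by (simp add: hw_grow assms(1,2))
  show "scnt n a > scnt n a'"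
    using move(2) by (simp add: scnt_eq_pow assms(1,2))
qed

end
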